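(* Let $A\in\mathbb{R}^{n\times n}$, $B\in\mathbb{R}^{n\times m}$, symmetric $Q\succeq 0$, symmetric $R\succ 0$, $Q_f\succ 0$, and a horizon $t_f\in\mathbb{N}$. For a binary switching signal $\sigma$, define $P_\sigma(t)$ for $t=t_f,t_f-1,\ldots,0$ by $P_\sigma(t_f)=Q_f$ and $P_\sigma(t)=Q+A^{\mathsf T}P_\sigma(t+1)A-\sigma(t)A^{\mathsf T}P_\sigma(t+1)B\,(R+B^{\mathsf T}P_\sigma(t+1)B)^{-1}B^{\mathsf T}P_\sigma(t+1)A$. If $\sigma_1\preceq\sigma_2$, then $P_{\sigma_1}(0)\succeq P_{\sigma_2}(0)$ (in the positive semidefinite order).
   Context: $P_\sigma(0)$ gives the optimal finite-horizon LQR cost $x_0^{\mathsf T}P_\sigma(0)x_0$ for the time-varying system $x(t+1)=Ax(t)+\sigma(t)Bu(t)$ with cost $x(t_f)^{\mathsf T}Q_fx(t_f)+\sum_{t<t_f}(x(t)^{\mathsf T}Qx(t)+u(t)^{\mathsf T}Ru(t))$. Partial order on binary signals: $\sigma_1\preceq\sigma_2$ if for every $i$ with $\sigma_1(i)=1$ we also have $\sigma_2(i)=1$. *)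

theory Defs
  imports "HOL-Analysis.Analysis"
begin

definition psd :: "real^'n^'n \<Rightarrow> bool" where
  "psd M \<longleftrightarrow> transpose M = M \<and> (\<forall>x. 0 \<le> x \<bullet> (M *v x))"

definition pd :: "real^'n^'n \<Rightarrow> bool" where
  "pd M \<longleftrightarrow> transpose M = M \<and> (\<forall>x. x \<noteq> 0 \<longrightarrow> 0 < x \<bullet> (M *v x))"

definition loewner_ge :: "real^'n^'n \<Rightarrow> real^'n^'n \<Rightarrow> bool" where
  "loewner_ge M N \<longleftrightarrow> psd (M - N)"

definition sig_le :: "(nat \<Rightarrow> bool) \<Rightarrow> (nat \<Rightarrow> bool) \<Rightarrow> bool" where
  "sig_le s1 s2 \<longleftrightarrow> (\<forall>i. s1 i \<longrightarrow> s2 i)"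

text \<open>Backward Riccati recursion, indexed by the number k of steps from the horizon:
  riccati_back ... k = P_sigma(tf - k).\<close>
fun riccati_back :: "real^'n^'n \<Rightarrow> real^'m^'n \<Rightarrow> real^'n^'n \<Rightarrow> real^'m^'m \<Rightarrow> real^'n^'n
    \<Rightarrow> (nat \<Rightarrow> bool) \<Rightarrow> nat \<Rightarrow> nat \<Rightarrow> real^'n^'n" where
  "riccati_back A B Q R Qf \<sigma> tf 0 = Qf"
| "riccati_back A B Q R Qf \<sigma> tf (Suc k) =
     (let P = riccati_back A B Q R Qf \<sigma> tf k; t = tf - Suc k in
      Q + transpose A ** P ** A
        - (of_bool (\<sigma> t) :: real) *\<^sub>R
            (transpose A ** P ** B ** matrix_inv (R + transpose B ** P ** B) ** transpose B ** P ** A))"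

definition P_sig :: "real^'n^'n \<Rightarrow> real^'m^'n \<Rightarrow> real^'n^'n \<Rightarrow> real^'m^'m \<Rightarrow> real^'n^'n
    \<Rightarrow> (nat \<Rightarrow> bool) \<Rightarrow> nat \<Rightarrow> nat \<Rightarrow> real^'n^'n" where
  "P_sig A B Q R Qf \<sigma> tf t = riccati_back A B Q R Qf \<sigma> tf (tf - t)"

end

theory Submission
  imports Defs
begin

(* Completing the square in u shows that the Riccati map is the value of a one-step LQR problem:
   x' F(P) x = min_u J_P(x, u) with J_P(x, u) = x'Qx + (Ax + Bu)' P (Ax + Bu) + u'Ru, whereas the
   uncontrolled step Q + A'PA is J_P(x, 0). Hence the uncontrolled step dominates the controlled one,
   and both are monotone in P because J_P is. Backward induction over the horizon then shows that
   switching the control on at more instants can only lower P_sigma. *)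

declare transpose_matrix_vector [simp del]

lemma transpose_add: "transpose (X + Y) = transpose X + transpose (Y :: 'a::plus^'n^'m)"
  by (simp add: transpose_def vec_eq_iff)

lemma transpose_diff: "transpose (X - Y) = transpose X - transpose (Y :: 'a::minus^'n^'m)"
  by (simp add: transpose_def vec_eq_iff)

lemma matrix_diff_ldistrib: "A ** (X - Y) = A ** X - A ** (Y :: 'a::ring_1^'k^'n)"
  by (simp add: matrix_matrix_mult_def vec_eq_iff algebra_simps sum_subtractf)

lemma matrix_diff_rdistrib: "(X - Y) ** A = X ** A - (Y :: 'a::ring_1^'n^'m) ** A"
  by (simp add: matrix_matrix_mult_def vec_eq_iff algebra_simps sum_subtractf)

lemma matrix_inv_right: "invertible M \<Longrightarrow> M ** matrix_inv M = mat 1"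
  unfolding invertible_def matrix_inv_def by (metis (mono_tags, lifting) someI_ex)

lemma transpose_matrix_inv_symmetric:
  fixes M :: "real^'m^'m"
  assumes "invertible M" and "transpose M = M"
  shows "transpose (matrix_inv M) = matrix_inv M"
proof -
  have "transpose (matrix_inv M) ** M = mat 1"
    using arg_cong[OF matrix_inv_right[OF assms(1)], of transpose] assms(2)
    by (simp add: matrix_transpose_mul)
  then have "transpose (matrix_inv M) = transpose (matrix_inv M) ** (M ** matrix_inv M)"
    by (simp add: matrix_inv_right[OF assms(1)])
  also have "\<dots> = matrix_inv M"
    by (simp add: matrix_mul_assoc \<open>transpose (matrix_inv M) ** M = mat 1\<close>)
  finally show ?thesis .
qed

lemma inner_transpose_left: "(x :: real^'n) \<bullet> (transpose A *v y) = (A *v x) \<bullet> y"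
  by (metis dot_lmul_matrix inner_commute vector_transpose_matrix transpose_transpose)

lemma inner_symmetric_matrix: "transpose P = P \<Longrightarrow> x \<bullet> (P *v y) = (P *v x) \<bullet> (y :: real^'n)"
  by (metis inner_transpose_left)

lemma quadratic_form_congruence:
  "x \<bullet> ((transpose A ** P ** A) *v x) = (A *v x) \<bullet> (P *v (A *v (x :: real^'n)))"
  by (simp add: inner_transpose_left flip: matrix_vector_mul_assoc)

lemma pd_imp_psd: "pd M \<Longrightarrow> psd M"
  unfolding pd_def psd_def by (metis inner_zero_left order_le_less)

lemma pd_imp_invertible:
  fixes M :: "real^'m^'m"
  assumes "pd M"
  shows "invertible M"
  unfolding invertible_left_inverse matrix_left_invertible_ker
  using assms unfolding pd_def by (metis inner_zero_right less_irrefl)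

lemma psd_add: "psd X \<Longrightarrow> psd Y \<Longrightarrow> psd (X + Y)"
  unfolding psd_def by (simp add: transpose_add matrix_vector_mult_add_rdistrib inner_add_right)

lemma pd_add_psd: "pd X \<Longrightarrow> psd Y \<Longrightarrow> pd (X + Y)"
  unfolding pd_def psd_def
  by (simp add: transpose_add matrix_vector_mult_add_rdistrib inner_add_right add_pos_nonneg)

lemma psd_congruence:
  fixes B :: "real^'m^'n"
  assumes "psd P"
  shows "psd (transpose B ** P ** B)"
  using assms unfolding psd_def
  by (simp add: quadratic_form_congruence matrix_transpose_mul matrix_mul_assoc)

lemma loewner_geI:
  assumes "transpose M = M" and "transpose N = N" and "\<And>x. x \<bullet> (N *v x) \<le> x \<bullet> (M *v x)"
  shows "loewner_ge M N"
  using assms unfolding loewner_ge_def psd_def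
  by (simp add: transpose_diff matrix_vector_mult_diff_rdistrib inner_diff_right)

lemma loewner_geD: "loewner_ge M N \<Longrightarrow> x \<bullet> (N *v x) \<le> x \<bullet> (M *v x)"
  unfolding loewner_ge_def psd_def
  by (metis diff_ge_0_iff_ge inner_diff_right matrix_vector_mult_diff_rdistrib)

lemma loewner_ge_psd: "loewner_ge M N \<Longrightarrow> psd N \<Longrightarrow> psd M"
  unfolding loewner_ge_def using psd_add[of "M - N" N] by simp

lemma loewner_ge_trans: "loewner_ge X Y \<Longrightarrow> loewner_ge Y Z \<Longrightarrow> loewner_ge X Z"
  unfolding loewner_ge_def using psd_add[of "X - Y" "Y - Z"] by simp

lemma loewner_ge_refl: "transpose M = M \<Longrightarrow> loewner_ge M M"
  by (simp add: loewner_geI)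

definition lyapunov_map :: "real^'n^'n \<Rightarrow> real^'n^'n \<Rightarrow> real^'n^'n \<Rightarrow> real^'n^'n" where
  "lyapunov_map A Q P = Q + transpose A ** P ** A"

definition riccati_map ::
    "real^'n^'n \<Rightarrow> real^'m^'n \<Rightarrow> real^'n^'n \<Rightarrow> real^'m^'m \<Rightarrow> real^'n^'n \<Rightarrow> real^'n^'n" where
  "riccati_map A B Q R P = lyapunov_map A Q P
     - transpose A ** P ** B ** matrix_inv (R + transpose B ** P ** B) ** transpose B ** P ** A"

definition lqr_stage_cost :: "real^'n^'n \<Rightarrow> real^'m^'n \<Rightarrow> real^'n^'n \<Rightarrow> real^'m^'m \<Rightarrow> real^'n^'n
    \<Rightarrow> real^'n \<Rightarrow> real^'m \<Rightarrow> real" where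
  "lqr_stage_cost A B Q R P x u =
     x \<bullet> (Q *v x) + (A *v x + B *v u) \<bullet> (P *v (A *v x + B *v u)) + u \<bullet> (R *v u)"

lemma quadratic_form_complete_square:
  fixes M :: "real^'m^'m"
  assumes "transpose M = M" and "invertible M"
  shows "(u + matrix_inv M *v v) \<bullet> (M *v (u + matrix_inv M *v v))
           = u \<bullet> (M *v u) + 2 * (u \<bullet> v) + v \<bullet> (matrix_inv M *v v)"
proof -
  define w where "w = matrix_inv M *v v"
  have Mw: "M *v w = v"
    by (simp add: w_def matrix_vector_mul_assoc matrix_inv_right[OF assms(2)])
  have "w \<bullet> (M *v u) = u \<bullet> v"
    using inner_symmetric_matrix[OF assms(1), of w u] Mw by (simp add: inner_commute)
  then show ?thesis
    by (simp add: Mw matrix_vector_right_distrib inner_add_left inner_add_right inner_commute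
        flip: w_def)
qed

lemma lqr_stage_cost_expand:
  assumes "transpose P = P"
  shows "lqr_stage_cost A B Q R P x u = x \<bullet> (lyapunov_map A Q P *v x)
           + 2 * (u \<bullet> (transpose B *v (P *v (A *v x))))
           + u \<bullet> ((R + transpose B ** P ** B) *v u)"
proof -
  have cross: "(B *v u) \<bullet> (P *v (A *v x)) = u \<bullet> (transpose B *v (P *v (A *v x)))"
    by (simp add: inner_transpose_left)
  have "(A *v x) \<bullet> (P *v (B *v u)) = (B *v u) \<bullet> (P *v (A *v x))"
    by (metis inner_symmetric_matrix[OF assms] inner_commute)
  then show ?thesis
    unfolding lqr_stage_cost_def lyapunov_map_def
    by (simp add: cross quadratic_form_congruence matrix_vector_right_distrib
        matrix_vector_mult_add_rdistrib inner_add_left inner_add_right)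
qed

lemma riccati_map_quadratic_form:
  fixes A :: "real^'n^'n" and B :: "real^'m^'n" and x :: "real^'n"
  assumes "transpose P = P"
  defines "v \<equiv> transpose B *v (P *v (A *v x))"
  shows "x \<bullet> (riccati_map A B Q R P *v x)
           = x \<bullet> (lyapunov_map A Q P *v x) - v \<bullet> (matrix_inv (R + transpose B ** P ** B) *v v)"
proof -
  let ?K = "matrix_inv (R + transpose B ** P ** B)"
  have "x \<bullet> ((transpose A ** P ** B ** ?K ** transpose B ** P ** A) *v x)
          = (A *v x) \<bullet> (P *v (B *v (?K *v v)))"
    by (simp add: v_def inner_transpose_left flip: matrix_vector_mul_assoc
       )
  also have "\<dots> = (B *v (?K *v v)) \<bullet> (P *v (A *v x))"
    by (metis inner_symmetric_matrix[OF assms(1)] inner_commute)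
  also have "\<dots> = v \<bullet> (?K *v v)"
    unfolding v_def by (metis inner_transpose_left inner_commute)
  finally show ?thesis
    unfolding riccati_map_def by (simp add: matrix_vector_mult_diff_rdistrib inner_diff_right)
qed

lemma lqr_stage_cost_completed_square:
  fixes A :: "real^'n^'n" and B :: "real^'m^'n" and x :: "real^'n"
  assumes "psd P" and "pd R"
  defines "M \<equiv> R + transpose B ** P ** B"
  defines "v \<equiv> transpose B *v (P *v (A *v x))"
  shows "lqr_stage_cost A B Q R P x u = x \<bullet> (riccati_map A B Q R P *v x)
           + (u + matrix_inv M *v v) \<bullet> (M *v (u + matrix_inv M *v v))"
proof -
  have "pd M"
    unfolding M_def using assms(1,2) by (intro pd_add_psd psd_congruence)
  then have "transpose M = M" and "invertible M"
    by (auto simp: pd_def pd_imp_invertible)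
  moreover have "transpose P = P"
    using assms(1) by (simp add: psd_def)
  ultimately show ?thesis
    by (simp add: lqr_stage_cost_expand riccati_map_quadratic_form quadratic_form_complete_square
        flip: M_def v_def)
qed

lemma riccati_map_le_lqr_stage_cost:
  assumes "psd P" and "pd R"
  shows "x \<bullet> (riccati_map A B Q R P *v x) \<le> lqr_stage_cost A B Q R P x u"
proof -
  have "psd (R + transpose B ** P ** B)"
    using pd_add_psd[OF assms(2) psd_congruence[OF assms(1)]] by (rule pd_imp_psd)
  then show ?thesis
    by (simp add: lqr_stage_cost_completed_square[OF assms] psd_def)
qed

lemma riccati_map_eq_lqr_stage_cost:
  assumes "psd P" and "pd R"
  obtains u where "x \<bullet> (riccati_map A B Q R P *v x) = lqr_stage_cost A B Q R P x u"
proof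
  let ?u = "- (matrix_inv (R + transpose B ** P ** B) *v (transpose B *v (P *v (A *v x))))"
  show "x \<bullet> (riccati_map A B Q R P *v x) = lqr_stage_cost A B Q R P x ?u"
    by (simp add: lqr_stage_cost_completed_square[OF assms])
qed

lemma lyapunov_map_eq_lqr_stage_cost:
  "x \<bullet> (lyapunov_map A Q P *v x) = lqr_stage_cost A B Q R P x 0"
  by (simp add: lqr_stage_cost_def lyapunov_map_def quadratic_form_congruence
      matrix_vector_mult_add_rdistrib inner_add_right)

lemma lqr_stage_cost_nonneg:
  assumes "psd Q" and "psd P" and "psd R"
  shows "0 \<le> lqr_stage_cost A B Q R P x u"
  using assms unfolding lqr_stage_cost_def psd_def by (simp add: add_nonneg_nonneg)

lemma lqr_stage_cost_mono:
  "loewner_ge P1 P2 \<Longrightarrow> lqr_stage_cost A B Q R P2 x u \<le> lqr_stage_cost A B Q R P1 x u"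
  unfolding lqr_stage_cost_def by (simp add: loewner_geD)

lemma lyapunov_map_symmetric:
  "transpose Q = Q \<Longrightarrow> transpose P = P \<Longrightarrow> transpose (lyapunov_map A Q P) = lyapunov_map A Q P"
  unfolding lyapunov_map_def by (simp add: transpose_add matrix_transpose_mul matrix_mul_assoc)

lemma riccati_map_symmetric:
  assumes "transpose Q = Q" and "psd P" and "pd R"
  shows "transpose (riccati_map A B Q R P) = riccati_map A B Q R P"
proof -
  have "pd (R + transpose B ** P ** B)"
    using assms(2,3) by (intro pd_add_psd psd_congruence)
  then have "transpose (matrix_inv (R + transpose B ** P ** B)) = matrix_inv (R + transpose B ** P ** B)"
    by (simp add: transpose_matrix_inv_symmetric pd_imp_invertible pd_def)
  moreover have "transpose P = P"
    using assms(2) by (simp add: psd_def)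
  ultimately show ?thesis
    unfolding riccati_map_def
    by (simp add: assms(1) lyapunov_map_symmetric transpose_diff matrix_transpose_mul matrix_mul_assoc)
qed

lemma psd_riccati_map:
  assumes "psd Q" and "psd P" and "pd R"
  shows "psd (riccati_map A B Q R P)"
  unfolding psd_def
proof (intro conjI allI)
  show "transpose (riccati_map A B Q R P) = riccati_map A B Q R P"
    using assms by (intro riccati_map_symmetric) (simp_all add: psd_def)
  fix x
  obtain u where "x \<bullet> (riccati_map A B Q R P *v x) = lqr_stage_cost A B Q R P x u"
    using riccati_map_eq_lqr_stage_cost[OF assms(2,3)] .
  then show "0 \<le> x \<bullet> (riccati_map A B Q R P *v x)"
    using lqr_stage_cost_nonneg[OF assms(1,2) pd_imp_psd[OF assms(3)]] by simp
qed

lemma lyapunov_map_ge_riccati_map: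
  assumes "psd Q" and "psd P" and "pd R"
  shows "loewner_ge (lyapunov_map A Q P) (riccati_map A B Q R P)"
proof (rule loewner_geI)
  show "transpose (lyapunov_map A Q P) = lyapunov_map A Q P"
    using assms(1,2) by (simp add: lyapunov_map_symmetric psd_def)
  show "transpose (riccati_map A B Q R P) = riccati_map A B Q R P"
    using assms by (intro riccati_map_symmetric) (simp_all add: psd_def)
  show "x \<bullet> (riccati_map A B Q R P *v x) \<le> x \<bullet> (lyapunov_map A Q P *v x)" for x
    using riccati_map_le_lqr_stage_cost[OF assms(2,3)]
    by (simp add: lyapunov_map_eq_lqr_stage_cost[where B = B and R = R])
qed

lemma lyapunov_map_mono:
  assumes "loewner_ge P1 P2"
  shows "loewner_ge (lyapunov_map A Q P1) (lyapunov_map A Q P2)"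
proof -
  have "lyapunov_map A Q P1 - lyapunov_map A Q P2 = transpose A ** (P1 - P2) ** A"
    by (simp add: lyapunov_map_def matrix_diff_ldistrib matrix_diff_rdistrib)
  then show ?thesis
    using assms psd_congruence unfolding loewner_ge_def by metis
qed

lemma riccati_map_mono:
  assumes "psd Q" and "pd R" and "psd P2" and "loewner_ge P1 P2"
  shows "loewner_ge (riccati_map A B Q R P1) (riccati_map A B Q R P2)"
proof (rule loewner_geI)
  have "psd P1"
    using assms(3,4) by (rule loewner_ge_psd[rotated])
  then show "transpose (riccati_map A B Q R P1) = riccati_map A B Q R P1"
    using assms by (intro riccati_map_symmetric) (simp_all add: psd_def)
  show "transpose (riccati_map A B Q R P2) = riccati_map A B Q R P2"
    using assms by (intro riccati_map_symmetric) (simp_all add: psd_def)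
  fix x
  obtain u where u: "x \<bullet> (riccati_map A B Q R P1 *v x) = lqr_stage_cost A B Q R P1 x u"
    using riccati_map_eq_lqr_stage_cost[OF \<open>psd P1\<close> assms(2)] .
  have "x \<bullet> (riccati_map A B Q R P2 *v x) \<le> lqr_stage_cost A B Q R P2 x u"
    using assms(3,2) by (rule riccati_map_le_lqr_stage_cost)
  also have "\<dots> \<le> lqr_stage_cost A B Q R P1 x u"
    using assms(4) by (rule lqr_stage_cost_mono)
  finally show "x \<bullet> (riccati_map A B Q R P2 *v x) \<le> x \<bullet> (riccati_map A B Q R P1 *v x)"
    by (simp only: u)
qed

lemma riccati_back_Suc_switch:
  "riccati_back A B Q R Qf \<sigma> tf (Suc k) =
     (if \<sigma> (tf - Suc k) then riccati_map A B Q R (riccati_back A B Q R Qf \<sigma> tf k)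
      else lyapunov_map A Q (riccati_back A B Q R Qf \<sigma> tf k))"
  by (simp add: riccati_map_def lyapunov_map_def Let_def)

lemma psd_riccati_back:
  assumes "psd Q" and "pd R" and "psd Qf"
  shows "psd (riccati_back A B Q R Qf \<sigma> tf k)"
proof (induction k)
  case 0
  show ?case using assms(3) by simp
next
  case (Suc k)
  then show ?case
    unfolding riccati_back_Suc_switch
    using psd_riccati_map[OF assms(1) Suc assms(2)]
      loewner_ge_psd[OF lyapunov_map_ge_riccati_map[OF assms(1) Suc assms(2)]]
    by auto
qed

lemma switched_riccati_step_antimono:
  assumes "psd Q" and "pd R" and "psd P2" and "loewner_ge P1 P2" and "b1 \<longrightarrow> b2"
  shows "loewner_ge (if b1 then riccati_map A B Q R P1 else lyapunov_map A Q P1)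
                    (if b2 then riccati_map A B Q R P2 else lyapunov_map A Q P2)"
  using assms riccati_map_mono[OF assms(1-4)] lyapunov_map_mono[OF assms(4)]
    loewner_ge_trans[OF lyapunov_map_mono[OF assms(4)] lyapunov_map_ge_riccati_map[OF assms(1,3,2)]]
  by auto

lemma riccati_back_antimono_signal:
  assumes "psd Q" and "pd R" and "psd Qf" and "sig_le \<sigma>1 \<sigma>2"
  shows "loewner_ge (riccati_back A B Q R Qf \<sigma>1 tf k) (riccati_back A B Q R Qf \<sigma>2 tf k)"
proof (induction k)
  case 0
  show ?case using assms(3) by (simp add: loewner_ge_refl psd_def)
next
  case (Suc k)
  then show ?case
    unfolding riccati_back_Suc_switch
    using assms(4) psd_riccati_back[OF assms(1-3)]
    by (intro switched_riccati_step_antimono[OF assms(1,2)]) (auto simp: sig_le_def)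
qed

theorem mainTheorem4:
  fixes A :: "real^'n^'n" and B :: "real^'m^'n" and Q Qf :: "real^'n^'n" and R :: "real^'m^'m"
    and tf :: nat and \<sigma>1 \<sigma>2 :: "nat \<Rightarrow> bool"
  assumes "psd Q" and "pd R" and "pd Qf"
    and "sig_le \<sigma>1 \<sigma>2"
  shows "loewner_ge (P_sig A B Q R Qf \<sigma>1 tf 0) (P_sig A B Q R Qf \<sigma>2 tf 0)"
  unfolding P_sig_def
  using assms(1,2) pd_imp_psd[OF assms(3)] assms(4) by (rule riccati_back_antimono_signal)

end
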